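(* Consider the translation and rotation invariant model described in the context, fix $\beta>0$, and let $\widehat{B}:(-\pi,\pi]^d\to(0,+\infty]$ be a continuous function such that (i) $\int_{(-\pi,\pi]^d}\widehat{B}(p)\,dp<\infty$ and (ii) $\widehat{D}^\Lambda_p\le\widehat{B}(p)$ for all $p\in\Lambda_*\setminus\{0\}$ and all boxes $\Lambda$. For a box $\Lambda$ and $\ell,\ell'\in\Lambda$ put $B^\Lambda_{\ell\ell'}=|\Lambda|^{-1}\sum_{p\in\Lambda_*\setminus\{0\}}\widehat{B}(p)\cos(p,\ell-\ell')$. Then for every box $\Lambda$ and all $\ell,\ell'\in\Lambda$, $$D^\Lambda_{\ell\ell'}\ge\big(D^\Lambda_{\ell\ell}-B^\Lambda_{\ell\ell}\big)+B^\Lambda_{\ell\ell'}.$$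
   Context: Model. $d,\nu\ge1$, $m>0$, $a>0$. Interaction: $J_{\ell\ell'}=\phi(|\ell_1-\ell'_1|,\dots,|\ell_d-\ell'_d|)$ with $\phi:\mathbb{N}_0^d\to[0,\infty)$, $\phi(0)=0$, $\sum_{\ell'}J_{\ell\ell'}<\infty$. Anharmonic potential $V:\mathbb{R}^\nu\to\mathbb{R}$, the same at all sites, continuous, with $V(Ux)=V(x)$ for all $U\in O(\nu)$ and $V(x)\ge A_V|x|^{2r}+B_V$ ($r>1$, $A_V>0$). $C_\beta$: continuous $\omega:[0,\beta]\to\mathbb{R}^\nu$ with $\omega(0)=\omega(\beta)$; $L^2_\beta=L^2([0,\beta]\to\mathbb{R}^\nu)$. $\chi$: centered Gaussian measure on $C_\beta$ with covariance $A^{-1}$, $A=(-m\frac{d^2}{d\tau^2}+a)\otimes\mathbf{I}$ with periodic boundary conditions; $\chi_\Lambda=\bigotimes_{\ell\in\Lambda}\chi$. Boxes: $\Lambda=\Lambda_L=(-L,L]^d\cap\mathbb{Z}^d$, regarded as a discrete torus of side $2L$; $J^\Lambda_{\ell\ell'}=\phi$ evaluated at the coordinatewise torus distances of $\ell,\ell'$. Periodic measure: $\nu^{\rm per}_\Lambda(d\omega_\Lambda)\propto\exp\big[\frac12\sum_{\ell,\ell'\in\Lambda}J^\Lambda_{\ell\ell'}(\omega_\ell,\omega_{\ell'})_{L^2_\beta}-\sum_{\ell\in\Lambda}\int_0^\beta V(\omega_\ell(\tau))d\tau\big]\chi_\Lambda(d\omega_\Lambda)$ (normalized to a probability). $D^\Lambda_{\ell\ell'}=\beta\int_0^\beta\langle(\omega_\ell(\tau),\omega_{\ell'}(\tau'))\rangle_{\nu^{\rm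 per}_\Lambda}d\tau'$ (independent of $\tau$). $\Lambda_*=\{p\in\mathbb{R}^d:p_j=-\pi+\frac{\pi}{L}s_j,\ s_j=1,\dots,2L\}$ and $\widehat{D}^\Lambda_p=\sum_{\ell'\in\Lambda}D^\Lambda_{\ell\ell'}e^{i(p,\ell'-\ell)}$ (independent of $\ell$). *)

theory Defs
  imports "HOL-Probability.Probability"
begin

definition Cper :: "real \<Rightarrow> (real \<Rightarrow> real^'v) set" where
  "Cper \<beta> = {\<omega>. continuous_on {0..\<beta>} \<omega> \<and> \<omega> 0 = \<omega> \<beta>}"

text \<open>C_beta with the sigma-algebra generated by the evaluations omega |-> omega(tau), tau in [0,beta]
  (trace of the cylinder sigma-algebra; equals the Borel sigma-algebra of the sup-norm topology).\<close>
definition path_space :: "real \<Rightarrow> (real \<Rightarrow> real^'v) measure" where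
  "path_space \<beta> = restrict_space (PiM {0..\<beta>} (\<lambda>_. borel)) (Cper \<beta>)"

text \<open>Integral kernel of A^{-1}, A = -m d^2/dtau^2 + a on [0,beta] with periodic boundary
  conditions, via its eigen-expansion (eigenfunctions exp(2 pi i k tau/beta)/sqrt beta,
  eigenvalues m (2 pi k/beta)^2 + a, k in Z).\<close>
definition greenK :: "real \<Rightarrow> real \<Rightarrow> real \<Rightarrow> real \<Rightarrow> real \<Rightarrow> real" where
  "greenK m a \<beta> t s = (1/\<beta>) * (1/a + 2 * (\<Sum>k. cos (2*pi*real (Suc k)*(t - s)/\<beta>)
        / (m * (2*pi*real (Suc k)/\<beta>)^2 + a)))"

text \<open>chi is the centered Gaussian probability measure on C_beta with covariance A^{-1} (times the
  identity on R^nu): characterised by its characteristic functional on finite-dimensional projections.\<close>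
definition periodic_gaussian :: "(real \<Rightarrow> real^'v) measure \<Rightarrow> real \<Rightarrow> real \<Rightarrow> real \<Rightarrow> bool" where
  "periodic_gaussian \<chi>\<^sub>0 m a \<beta> \<longleftrightarrow>
     prob_space \<chi>\<^sub>0 \<and> sets \<chi>\<^sub>0 = sets (path_space \<beta>) \<and>
     (\<forall>(n::nat) (ts::nat \<Rightarrow> real) (vs::nat \<Rightarrow> real^'v). (\<forall>k<n. ts k \<in> {0..\<beta>}) \<longrightarrow>
        integral\<^sup>L \<chi>\<^sub>0 (\<lambda>\<omega>. cis (\<Sum>k<n. \<omega> (ts k) \<bullet> vs k))
        = complex_of_real (exp (- (\<Sum>k<n. \<Sum>l<n. greenK m a \<beta> (ts k) (ts l) * (vs k \<bullet> vs l)) / 2)))"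

definition lbox :: "nat \<Rightarrow> (int^'d) set" where
  "lbox L = {l. \<forall>j. - int L < l$j \<and> l$j \<le> int L}"

definition tdist :: "nat \<Rightarrow> int \<Rightarrow> int \<Rightarrow> nat" where
  "tdist L x y = (let r = (x - y) mod (2 * int L) in nat (min r (2 * int L - r)))"

definition Jper :: "(nat^'d \<Rightarrow> real) \<Rightarrow> nat \<Rightarrow> int^'d \<Rightarrow> int^'d \<Rightarrow> real" where
  "Jper \<phi> L l l' = \<phi> (\<chi> j. tdist L (l$j) (l'$j))"

definition ipL2 :: "real \<Rightarrow> (real \<Rightarrow> real^'v) \<Rightarrow> (real \<Rightarrow> real^'v) \<Rightarrow> real" where
  "ipL2 \<beta> \<omega> \<omega>' = integral {0..\<beta>} (\<lambda>\<tau>. \<omega> \<tau> \<bullet> \<omega>' \<tau>)"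

definition Wper :: "(nat^'d \<Rightarrow> real) \<Rightarrow> (real^'v \<Rightarrow> real) \<Rightarrow> real \<Rightarrow> nat
     \<Rightarrow> (int^'d \<Rightarrow> real \<Rightarrow> real^'v) \<Rightarrow> real" where
  "Wper \<phi> V \<beta> L \<omega> = (1/2) * (\<Sum>l\<in>lbox L. \<Sum>l'\<in>lbox L. Jper \<phi> L l l' * ipL2 \<beta> (\<omega> l) (\<omega> l'))
      - (\<Sum>l\<in>lbox L. integral {0..\<beta>} (\<lambda>\<tau>. V (\<omega> l \<tau>)))"

definition chiL :: "(real \<Rightarrow> real^'v) measure \<Rightarrow> nat \<Rightarrow> (int^'d \<Rightarrow> real \<Rightarrow> real^'v) measure" where
  "chiL \<chi>\<^sub>0 L = PiM (lbox L) (\<lambda>_. \<chi>\<^sub>0)"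

definition nuper :: "(real \<Rightarrow> real^'v) measure \<Rightarrow> (nat^'d \<Rightarrow> real) \<Rightarrow> (real^'v \<Rightarrow> real) \<Rightarrow> real \<Rightarrow> nat
     \<Rightarrow> (int^'d \<Rightarrow> real \<Rightarrow> real^'v) measure" where
  "nuper \<chi>\<^sub>0 \<phi> V \<beta> L = density (chiL \<chi>\<^sub>0 L)
      (\<lambda>\<omega>. ennreal (exp (Wper \<phi> V \<beta> L \<omega>) / integral\<^sup>L (chiL \<chi>\<^sub>0 L) (\<lambda>\<omega>'. exp (Wper \<phi> V \<beta> L \<omega>'))))"

text \<open>D^Lambda_{l l'} (taken at tau = 0; it is independent of tau).\<close>
definition Dmat :: "(real \<Rightarrow> real^'v) measure \<Rightarrow> (nat^'d \<Rightarrow> real) \<Rightarrow> (real^'v \<Rightarrow> real) \<Rightarrow> real \<Rightarrow> nat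
     \<Rightarrow> int^'d \<Rightarrow> int^'d \<Rightarrow> real" where
  "Dmat \<chi>\<^sub>0 \<phi> V \<beta> L l l' =
     \<beta> * integral {0..\<beta>} (\<lambda>\<tau>'. integral\<^sup>L (nuper \<chi>\<^sub>0 \<phi> V \<beta> L) (\<lambda>\<omega>. \<omega> l 0 \<bullet> \<omega> l' \<tau>'))"

definition dual :: "nat \<Rightarrow> (real^'d) set" where
  "dual L = {p. \<forall>j. \<exists>s::nat. 1 \<le> s \<and> s \<le> 2 * L \<and> p$j = - pi + pi / real L * real s}"

definition pdot :: "real^'d \<Rightarrow> int^'d \<Rightarrow> real" where
  "pdot p l = (\<Sum>j\<in>UNIV. p$j * real_of_int (l$j))"

text \<open>hat D^Lambda_p, computed with l = 0 (it is independent of l).\<close>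
definition Dhat :: "(real \<Rightarrow> real^'v) measure \<Rightarrow> (nat^'d \<Rightarrow> real) \<Rightarrow> (real^'v \<Rightarrow> real) \<Rightarrow> real \<Rightarrow> nat
     \<Rightarrow> real^'d \<Rightarrow> complex" where
  "Dhat \<chi>\<^sub>0 \<phi> V \<beta> L p = (\<Sum>l'\<in>lbox L. complex_of_real (Dmat \<chi>\<^sub>0 \<phi> V \<beta> L 0 l') * cis (pdot p l'))"

definition cube :: "(real^'d) set" where
  "cube = {p. \<forall>j. - pi < p$j \<and> p$j \<le> pi}"

definition Bmat :: "(real^'d \<Rightarrow> ennreal) \<Rightarrow> nat \<Rightarrow> int^'d \<Rightarrow> int^'d \<Rightarrow> real" where
  "Bmat Bh L l l' = (1 / real (card (lbox L :: (int^'d) set))) *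
      (\<Sum>p\<in>dual L - {0}. enn2real (Bh p) * cos (pdot p (l - l')))"

end

theory Submission
  imports Defs
begin

text \<open>By the torus symmetries of the interaction, \<open>D\<^sup>\<Lambda>\<^sub>\<ell>\<^sub>\<ell>\<^sub>' = g (\<ell>' - \<ell>)\<close> for an even function
  \<open>g\<close> on the torus, whose Fourier transform is \<open>D\<^sup>\<Lambda>\<^sub>p\<close>. Fourier inversion gives
  \<open>|\<Lambda>| (g x - g 0) = \<Sum>\<^sub>p D\<^sup>\<Lambda>\<^sub>p (cos (p, x) - 1)\<close>, where the term \<open>p = 0\<close> vanishes; since
  \<open>cos (p, x) - 1 \<le> 0\<close>, replacing \<open>D\<^sup>\<Lambda>\<^sub>p\<close> by the larger \<open>B(p)\<close> can only decrease the sum, which is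
  \<open>|\<Lambda>| (B\<^sup>\<Lambda>\<^sub>\<ell>\<^sub>\<ell>\<^sub>' - B\<^sup>\<Lambda>\<^sub>\<ell>\<^sub>\<ell>)\<close>.\<close>

subsection \<open>Invariance of densities under measure-preserving bijections\<close>

text \<open>The integrand \<open>g\<close> need not be measurable: the simple functions below \<open>g \<circ> T\<close> are
  transported by the inverse \<open>S\<close> to simple functions below \<open>g\<close>.\<close>
lemma nn_integral_comp_measure_preserving_le:
  assumes T: "T \<in> M \<rightarrow>\<^sub>M M" and S: "S \<in> M \<rightarrow>\<^sub>M M"
    and TS: "\<And>x. x \<in> space M \<Longrightarrow> T (S x) = x" and ST: "\<And>x. x \<in> space M \<Longrightarrow> S (T x) = x"
    and distr_T: "distr M M T = M"
  shows "(\<integral>\<^sup>+x. g (T x) \<partial>M) \<le> integral\<^sup>N M g"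
  unfolding nn_integral_def[of M "\<lambda>x. g (T x)"]
proof (rule SUP_least)
  fix \<phi> assume "\<phi> \<in> {h. simple_function M h \<and> h \<le> (\<lambda>x. g (T x))}"
  then have sf: "simple_function M \<phi>" and le: "\<And>x. \<phi> x \<le> g (T x)" by (auto simp: le_fun_def)
  define \<psi> where "\<psi> x = \<phi> (S x) * indicator (space M) x" for x
  have "\<psi> \<in> borel_measurable M" unfolding \<psi>_def
    using measurable_comp[OF S borel_measurable_simple_function[OF sf]]
    by (intro borel_measurable_times_ennreal) (auto simp: comp_def)
  have "integral\<^sup>S M \<phi> = (\<integral>\<^sup>+x. \<psi> (T x) \<partial>M)"
    unfolding nn_integral_eq_simple_integral[OF sf, symmetric]
    using ST measurable_space[OF T] by (intro nn_integral_cong) (auto simp: \<psi>_def)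
  also have "\<dots> = integral\<^sup>N M \<psi>"
    using nn_integral_distr[OF T, of \<psi>] \<open>\<psi> \<in> borel_measurable M\<close> distr_T by simp
  also have "\<dots> \<le> integral\<^sup>N M g"
    using le TS measurable_space[OF S] by (intro nn_integral_mono) (metis \<psi>_def indicator_simps(1) mult_1_right)
  finally show "integral\<^sup>S M \<phi> \<le> integral\<^sup>N M g" .
qed

lemma nn_integral_comp_measure_preserving:
  assumes T: "T \<in> M \<rightarrow>\<^sub>M M" and S: "S \<in> M \<rightarrow>\<^sub>M M"
    and TS: "\<And>x. x \<in> space M \<Longrightarrow> T (S x) = x" and ST: "\<And>x. x \<in> space M \<Longrightarrow> S (T x) = x"
    and distr_T: "distr M M T = M" and distr_S: "distr M M S = M"
  shows "(\<integral>\<^sup>+x. g (T x) \<partial>M) = integral\<^sup>N M g"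
proof (rule antisym)
  show "(\<integral>\<^sup>+x. g (T x) \<partial>M) \<le> integral\<^sup>N M g"
    by (rule nn_integral_comp_measure_preserving_le[OF T S TS ST distr_T])
  have "integral\<^sup>N M g = (\<integral>\<^sup>+x. g (T (S x)) \<partial>M)" by (rule nn_integral_cong) (simp add: TS)
  also have "\<dots> \<le> (\<integral>\<^sup>+x. g (T x) \<partial>M)"
    by (rule nn_integral_comp_measure_preserving_le[OF S T ST TS distr_S])
  finally show "integral\<^sup>N M g \<le> (\<integral>\<^sup>+x. g (T x) \<partial>M)" .
qed

lemma distr_density_invariant:
  assumes T: "T \<in> M \<rightarrow>\<^sub>M M" and S: "S \<in> M \<rightarrow>\<^sub>M M"
    and TS: "\<And>x. x \<in> space M \<Longrightarrow> T (S x) = x" and ST: "\<And>x. x \<in> space M \<Longrightarrow> S (T x) = x"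
    and distr_T: "distr M M T = M" and distr_S: "distr M M S = M"
    and f_T: "\<And>x. x \<in> space M \<Longrightarrow> f (T x) = f x"
  shows "distr (density M f) (density M f) T = density M f"
proof (rule measure_eqI)
  fix A assume "A \<in> sets (distr (density M f) (density M f) T)"
  then have A: "A \<in> sets M" by simp
  define \<mu> where "\<mu> A = (\<integral>\<^sup>+ x. f x * indicator A x \<partial>M)" for A
  have "\<mu> (T -` A \<inter> space M) = (\<integral>\<^sup>+x. (\<lambda>y. f y * indicator A y) (T x) \<partial>M)"
    unfolding \<mu>_def using f_T by (intro nn_integral_cong) (auto simp: indicator_def)
  also have "\<dots> = \<mu> A"
    unfolding \<mu>_def by (rule nn_integral_comp_measure_preserving[OF T S TS ST distr_T distr_S])
  finally have "\<mu> (T -` A \<inter> space M) = \<mu> A" .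
  \<comment> \<open>\<open>f\<close> is not assumed measurable, so the definition of \<open>density\<close> is unfolded directly.\<close>
  then have "emeasure (density M f) (T -` A \<inter> space M) = emeasure (density M f) A"
    unfolding density_def emeasure_measure_of_conv sets.sigma_sets_eq
    using A T by (simp add: \<mu>_def measurable_sets)
  then show "emeasure (distr (density M f) (density M f) T) A = emeasure (density M f) A"
    using A T by (simp add: emeasure_distr)
qed simp


subsection \<open>Lattice symmetries of the periodic measure\<close>

lemma measurable_path_eval:
  assumes "sets \<chi>\<^sub>0 = sets (path_space \<beta>)" and "t \<in> {0..\<beta>}"
  shows "(\<lambda>x::real \<Rightarrow> real^'v. x t) \<in> borel_measurable \<chi>\<^sub>0"
proof -
  have "(\<lambda>x::real \<Rightarrow> real^'v. x t) \<in> borel_measurable (PiM {0..\<beta>} (\<lambda>_. borel))"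
    using assms(2) by (rule measurable_component_singleton)
  then have "(\<lambda>x::real \<Rightarrow> real^'v. x t) \<in> borel_measurable (path_space \<beta>)"
    unfolding path_space_def by (rule measurable_restrict_space1)
  then show ?thesis by (simp add: measurable_cong_sets[OF assms(1) refl])
qed

lemma Wper_reindex:
  assumes bij: "bij_betw \<sigma> (lbox L) (lbox L)"
    and J: "\<And>l l'. l \<in> lbox L \<Longrightarrow> l' \<in> lbox L \<Longrightarrow> Jper \<phi> L (\<sigma> l) (\<sigma> l') = Jper \<phi> L l l'"
  shows "Wper \<phi> V \<beta> L (\<lambda>k\<in>lbox L. \<omega> (\<sigma> k)) = Wper \<phi> V \<beta> L \<omega>"
proof -
  have "(\<Sum>l\<in>lbox L. \<Sum>l'\<in>lbox L. Jper \<phi> L l l' * ipL2 \<beta> (\<omega> (\<sigma> l)) (\<omega> (\<sigma> l')))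
      = (\<Sum>l\<in>lbox L. \<Sum>l'\<in>lbox L. Jper \<phi> L (\<sigma> l) (\<sigma> l') * ipL2 \<beta> (\<omega> (\<sigma> l)) (\<omega> (\<sigma> l')))"
    by (intro sum.cong refl) (simp add: J)
  also have "\<dots> = (\<Sum>l\<in>lbox L. \<Sum>l'\<in>lbox L. Jper \<phi> L l l' * ipL2 \<beta> (\<omega> l) (\<omega> l'))"
    using sum.reindex_bij_betw[OF bij, of "\<lambda>l'. Jper \<phi> L _ l' * ipL2 \<beta> (\<omega> _) (\<omega> l')"]
      sum.reindex_bij_betw[OF bij, of "\<lambda>l. \<Sum>l'\<in>lbox L. Jper \<phi> L l l' * ipL2 \<beta> (\<omega> l) (\<omega> l')"]
    by simp
  finally have pair_term: "(\<Sum>l\<in>lbox L. \<Sum>l'\<in>lbox L. Jper \<phi> L l l' * ipL2 \<beta> (\<omega> (\<sigma> l)) (\<omega> (\<sigma> l')))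
      = (\<Sum>l\<in>lbox L. \<Sum>l'\<in>lbox L. Jper \<phi> L l l' * ipL2 \<beta> (\<omega> l) (\<omega> l'))" .
  have site_term: "(\<Sum>l\<in>lbox L. integral {0..\<beta>} (\<lambda>\<tau>. V (\<omega> (\<sigma> l) \<tau>)))
      = (\<Sum>l\<in>lbox L. integral {0..\<beta>} (\<lambda>\<tau>. V (\<omega> l \<tau>)))"
    by (rule sum.reindex_bij_betw[OF bij])
  show ?thesis
    unfolding Wper_def using pair_term site_term by (simp cong: sum.cong)
qed

lemma Dmat_reindex:
  fixes \<sigma> :: "int^'d \<Rightarrow> int^'d" and \<chi>\<^sub>0 :: "(real \<Rightarrow> real^'v) measure"
  assumes "prob_space \<chi>\<^sub>0" and sets_\<chi>: "sets \<chi>\<^sub>0 = sets (path_space \<beta>)"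
    and bij: "bij_betw \<sigma> (lbox L) (lbox L)"
    and J: "\<And>l l'. l \<in> lbox L \<Longrightarrow> l' \<in> lbox L \<Longrightarrow> Jper \<phi> L (\<sigma> l) (\<sigma> l') = Jper \<phi> L l l'"
    and l: "l \<in> lbox L" "l' \<in> lbox L"
  shows "Dmat \<chi>\<^sub>0 \<phi> V \<beta> L (\<sigma> l) (\<sigma> l') = Dmat \<chi>\<^sub>0 \<phi> V \<beta> L l l'"
proof -
  define M where "M = (chiL \<chi>\<^sub>0 L :: (int^'d \<Rightarrow> real \<Rightarrow> real^'v) measure)"
  define T where "T \<rho> \<omega> = (\<lambda>k\<in>lbox L. \<omega> (\<rho> k))"
    for \<rho> :: "int^'d \<Rightarrow> int^'d" and \<omega> :: "int^'d \<Rightarrow> real \<Rightarrow> real^'v"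
  define \<sigma>' where "\<sigma>' = inv_into (lbox L) \<sigma>"
  have bij': "bij_betw \<sigma>' (lbox L) (lbox L)" unfolding \<sigma>'_def by (rule bij_betw_inv_into[OF bij])
  have T_meas: "T \<rho> \<in> M \<rightarrow>\<^sub>M M" if "bij_betw \<rho> (lbox L) (lbox L)" for \<rho>
    unfolding T_def M_def chiL_def using that
    by (intro measurable_restrict measurable_component_singleton) (auto dest: bij_betwE)
  have T_distr: "distr M M (T \<rho>) = M" if "bij_betw \<rho> (lbox L) (lbox L)" for \<rho>
    unfolding T_def M_def chiL_def
    using distr_PiM_reindex[of "lbox L" "\<lambda>_. \<chi>\<^sub>0" \<rho> "lbox L"] assms(1) that
    by (auto simp: bij_betw_def)
  have space_M: "space M = PiE (lbox L) (\<lambda>_. space \<chi>\<^sub>0)"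
    unfolding M_def chiL_def by (simp add: space_PiM)
  have T_inverse: "T \<sigma> (T \<sigma>' x) = x" "T \<sigma>' (T \<sigma> x) = x" if "x \<in> space M" for x
    using that bij bij' bij_betw_inv_into_left[OF bij] bij_betw_inv_into_right[OF bij]
    unfolding space_M T_def \<sigma>'_def
    by (auto simp: fun_eq_iff PiE_def extensional_def dest: bij_betwE)
  define f where "f \<omega> = ennreal (exp (Wper \<phi> V \<beta> L \<omega>) / integral\<^sup>L M (\<lambda>\<omega>'. exp (Wper \<phi> V \<beta> L \<omega>')))" for \<omega>
  have nu: "nuper \<chi>\<^sub>0 \<phi> V \<beta> L = density M f" unfolding nuper_def f_def M_def ..
  have f_T: "f (T \<sigma> \<omega>) = f \<omega>" for \<omega>
    unfolding f_def T_def by (simp only: Wper_reindex[OF bij J])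
  have nu_invariant: "distr (density M f) (density M f) (T \<sigma>) = density M f"
    using distr_density_invariant[OF T_meas[OF bij] T_meas[OF bij'] T_inverse T_distr[OF bij]
        T_distr[OF bij'], of f] f_T by blast
  have "integral\<^sup>L (density M f) (\<lambda>\<omega>. \<omega> (\<sigma> l) 0 \<bullet> \<omega> (\<sigma> l') \<tau>) = integral\<^sup>L (density M f) (\<lambda>\<omega>. \<omega> l 0 \<bullet> \<omega> l' \<tau>)"
    if "\<tau> \<in> {0..\<beta>}" for \<tau>
  proof -
    let ?h = "\<lambda>\<omega>::int^'d \<Rightarrow> real \<Rightarrow> real^'v. \<omega> l 0 \<bullet> \<omega> l' \<tau>"
    have eval_site: "(\<lambda>\<omega>. \<omega> k) \<in> M \<rightarrow>\<^sub>M \<chi>\<^sub>0" if "k \<in> lbox L" for k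
      unfolding M_def chiL_def using that by (rule measurable_component_singleton)
    have "?h \<in> borel_measurable M"
      using \<open>\<tau> \<in> {0..\<beta>}\<close>
      by (intro borel_measurable_inner measurable_compose[OF eval_site measurable_path_eval[OF sets_\<chi>]] l)
        auto
    then have "?h \<in> borel_measurable (density M f)" by simp
    then have "integral\<^sup>L (density M f) (\<lambda>\<omega>. ?h (T \<sigma> \<omega>)) = integral\<^sup>L (density M f) ?h"
      using integral_distr[of "T \<sigma>" "density M f" "density M f" ?h] T_meas[OF bij]
      by (simp add: nu_invariant)
    then show ?thesis using l by (simp add: T_def)
  qed
  then show ?thesis unfolding Dmat_def nu by (metis (no_types, lifting) integral_cong)
qed

subsection \<open>Translations and reflections of the discrete torus\<close>

text \<open>The representative of \<open>x mod 2L\<close> in \<open>(-L, L]\<close>.\<close>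
definition torus_rep :: "nat \<Rightarrow> int \<Rightarrow> int" where
  "torus_rep L x = (x + int L - 1) mod (2 * int L) - int L + 1"

definition torus_shift :: "nat \<Rightarrow> int^'d \<Rightarrow> int^'d \<Rightarrow> int^'d" where
  "torus_shift L a l = (\<chi> j. torus_rep L (l$j + a$j))"

definition torus_refl :: "nat \<Rightarrow> int^'d \<Rightarrow> int^'d" where
  "torus_refl L l = (\<chi> j. torus_rep L (- l$j))"

lemma torus_rep_bounds:
  assumes "L \<ge> 1" shows "- int L < torus_rep L x" "torus_rep L x \<le> int L"
proof -
  have "0 \<le> (x + int L - 1) mod (2 * int L)" "(x + int L - 1) mod (2 * int L) < 2 * int L"
    using assms by auto
  then show "- int L < torus_rep L x" "torus_rep L x \<le> int L" unfolding torus_rep_def by linarith+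
qed

lemma torus_rep_mod: "torus_rep L x mod (2 * int L) = x mod (2 * int L)"
proof -
  have "torus_rep L x = x + (- ((x + int L - 1) div (2 * int L))) * (2 * int L)"
    unfolding torus_rep_def by (simp add: minus_div_mult_eq_mod[symmetric] algebra_simps)
  then show ?thesis by (simp only: mod_mult_self1)
qed

lemma torus_rep_diff_mod: "(torus_rep L x - x) mod (2 * int L) = 0"
  by (metis mod_diff_cong torus_rep_mod diff_self mod_0)

lemma torus_rep_cong:
  assumes "x mod (2 * int L) = y mod (2 * int L)" shows "torus_rep L x = torus_rep L y"
proof -
  have "(x + (int L - 1)) mod (2 * int L) = (y + (int L - 1)) mod (2 * int L)"
    using assms by (rule mod_add_cong) simp
  then show ?thesis unfolding torus_rep_def by (simp add: algebra_simps)
qed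

lemma torus_rep_id:
  assumes "- int L < x" "x \<le> int L" shows "torus_rep L x = x"
proof -
  have "(x + int L - 1) mod (2 * int L) = x + int L - 1"
    using assms by (intro mod_pos_pos_trivial) auto
  then show ?thesis unfolding torus_rep_def by simp
qed

lemma torus_rep_zero: "torus_rep L 0 = 0"
  by (cases "L = 0") (auto simp: torus_rep_def intro: torus_rep_id)

lemma mem_lbox_iff: "l \<in> lbox L \<longleftrightarrow> (\<forall>j. - int L < l$j \<and> l$j \<le> int L)"
  unfolding lbox_def by simp

lemma zero_mem_lbox: "L \<ge> 1 \<Longrightarrow> 0 \<in> lbox L"
  unfolding mem_lbox_iff by simp

lemma torus_rep_lbox: "l \<in> lbox L \<Longrightarrow> torus_rep L (l$j) = l$j"
  unfolding mem_lbox_iff by (simp add: torus_rep_id)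

lemma torus_shift_mem_lbox: "L \<ge> 1 \<Longrightarrow> torus_shift L a l \<in> lbox L"
  unfolding mem_lbox_iff torus_shift_def using torus_rep_bounds by simp

lemma torus_refl_mem_lbox: "L \<ge> 1 \<Longrightarrow> torus_refl L l \<in> lbox L"
  unfolding mem_lbox_iff torus_refl_def using torus_rep_bounds by simp

lemma torus_shift_neg_self: "torus_shift L (- l) l = 0"
  unfolding torus_shift_def by (simp add: torus_rep_zero vec_eq_iff)

lemma torus_refl_zero: "torus_refl L 0 = 0"
  unfolding torus_refl_def by (simp add: torus_rep_zero vec_eq_iff)

lemma torus_shift_inverse:
  assumes "l \<in> lbox L" shows "torus_shift L (- a) (torus_shift L a l) = l"
proof -
  have "torus_rep L (torus_rep L (l$j + a$j) + - a$j) = torus_rep L (l$j)" for j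
    by (rule torus_rep_cong) (metis add_diff_cancel_right' diff_minus_eq_add mod_diff_cong torus_rep_mod)
  then show ?thesis unfolding torus_shift_def by (simp add: vec_eq_iff torus_rep_lbox[OF assms])
qed

lemma torus_refl_involution:
  assumes "l \<in> lbox L" shows "torus_refl L (torus_refl L l) = l"
proof -
  have "torus_rep L (- torus_rep L (- l$j)) = torus_rep L (l$j)" for j
    by (rule torus_rep_cong) (metis minus_minus mod_minus_cong torus_rep_mod)
  then show ?thesis unfolding torus_refl_def by (simp add: vec_eq_iff torus_rep_lbox[OF assms])
qed

lemma bij_betw_torus_shift: "L \<ge> 1 \<Longrightarrow> bij_betw (torus_shift L a) (lbox L) (lbox L)"
  using torus_shift_inverse[of _ L "- a"]
  by (intro bij_betw_byWitness[where f' = "torus_shift L (- a)"])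
    (auto simp: torus_shift_inverse torus_shift_mem_lbox)

lemma bij_betw_torus_refl: "L \<ge> 1 \<Longrightarrow> bij_betw (torus_refl L) (lbox L) (lbox L)"
  by (rule bij_betw_byWitness[where f' = "torus_refl L"])
    (auto simp: torus_refl_involution torus_refl_mem_lbox)

lemma tdist_cong:
  "(x - y) mod (2 * int L) = (x' - y') mod (2 * int L) \<Longrightarrow> tdist L x y = tdist L x' y'"
  unfolding tdist_def by simp

lemma tdist_uminus: "tdist L (- x) (- y) = tdist L x y"
proof -
  have "(y - x) mod (2 * int L) =
      (if (x - y) mod (2 * int L) = 0 then 0 else 2 * int L - (x - y) mod (2 * int L))"
    by (metis minus_diff_eq zmod_zminus1_eq_if)
  then show ?thesis unfolding tdist_def Let_def by (auto simp: min_def)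
qed

lemma Jper_torus_shift: "Jper \<phi> L (torus_shift L a l) (torus_shift L a l') = Jper \<phi> L l l'"
proof -
  have "tdist L (torus_rep L (l$j + a$j)) (torus_rep L (l'$j + a$j)) = tdist L (l$j) (l'$j)" for j
    by (rule tdist_cong) (simp add: mod_diff_cong[OF torus_rep_mod torus_rep_mod])
  then show ?thesis unfolding Jper_def torus_shift_def by simp
qed

lemma Jper_torus_refl: "Jper \<phi> L (torus_refl L l) (torus_refl L l') = Jper \<phi> L l l'"
proof -
  have "tdist L (torus_rep L (- l$j)) (torus_rep L (- l'$j)) = tdist L (- l$j) (- l'$j)" for j
    by (rule tdist_cong) (simp add: mod_diff_cong[OF torus_rep_mod torus_rep_mod])
  then show ?thesis unfolding Jper_def torus_refl_def by (simp add: tdist_uminus)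
qed

lemma Dmat_torus_shift:
  assumes "prob_space \<chi>\<^sub>0" "sets \<chi>\<^sub>0 = sets (path_space \<beta>)" "L \<ge> 1"
    and "l \<in> lbox L" "l' \<in> lbox L"
  shows "Dmat \<chi>\<^sub>0 \<phi> V \<beta> L l l' = Dmat \<chi>\<^sub>0 \<phi> V \<beta> L 0 (torus_shift L (- l) l')"
  using Dmat_reindex[OF assms(1,2) bij_betw_torus_shift[OF assms(3), of "- l"] Jper_torus_shift assms(4,5)]
  by (simp add: torus_shift_neg_self)

lemma Dmat_torus_refl:
  assumes "prob_space \<chi>\<^sub>0" "sets \<chi>\<^sub>0 = sets (path_space \<beta>)" "L \<ge> 1" "l \<in> lbox L"
  shows "Dmat \<chi>\<^sub>0 \<phi> V \<beta> L 0 (torus_refl L l) = Dmat \<chi>\<^sub>0 \<phi> V \<beta> L 0 l"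
  using Dmat_reindex[OF assms(1,2) bij_betw_torus_refl[OF assms(3)] Jper_torus_refl
      zero_mem_lbox[OF assms(3)] assms(4)]
  by (simp add: torus_refl_zero)

subsection \<open>Fourier analysis on the box\<close>

lemma vec_set_eq_image_PiE: "{p::'a^'d. \<forall>j. p$j \<in> A} = vec_lambda ` PiE UNIV (\<lambda>_. A)"
proof (intro set_eqI iffI)
  fix p :: "'a^'d" assume "p \<in> {p. \<forall>j. p$j \<in> A}"
  then have "vec_nth p \<in> PiE UNIV (\<lambda>_. A)" by auto
  then show "p \<in> vec_lambda ` PiE UNIV (\<lambda>_. A)" by (metis image_eqI vec_nth_inverse)
qed auto

lemma sum_prod_vec_set:
  fixes F :: "'d::finite \<Rightarrow> 'a \<Rightarrow> 'c::comm_semiring_1"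
  assumes "finite A"
  shows "(\<Sum>p\<in>{p::'a^'d. \<forall>j. p$j \<in> A}. \<Prod>j\<in>UNIV. F j (p$j)) = (\<Prod>j\<in>UNIV. \<Sum>a\<in>A. F j a)"
proof -
  have "inj_on vec_lambda (PiE UNIV (\<lambda>_::'d. A))"
    by (intro inj_onI) (metis vec_lambda_inverse UNIV_I)
  then have "(\<Sum>p\<in>{p::'a^'d. \<forall>j. p$j \<in> A}. \<Prod>j\<in>UNIV. F j (p$j))
      = (\<Sum>g\<in>PiE UNIV (\<lambda>_. A). \<Prod>j\<in>UNIV. F j (g j))"
    unfolding vec_set_eq_image_PiE by (subst sum.reindex) simp_all
  also have "\<dots> = (\<Prod>j\<in>UNIV. \<Sum>a\<in>A. F j a)"
    using assms by (simp add: prod_sum_PiE)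
  finally show ?thesis .
qed

lemma finite_vec_set: "finite A \<Longrightarrow> finite {p::'a^'d::finite. \<forall>j. p$j \<in> A}"
  unfolding vec_set_eq_image_PiE by (intro finite_imageI finite_PiE) auto

lemma cis_sum: "finite A \<Longrightarrow> cis (\<Sum>a\<in>A. f a) = (\<Prod>a\<in>A. cis (f a))"
  by (induction A rule: finite_induct) (simp_all add: cis_mult[symmetric])

definition dual_coord :: "nat \<Rightarrow> real set" where
  "dual_coord L = (\<lambda>s. - pi + pi / real L * real s) ` {1..2*L}"

lemma mem_dual_coord_iff:
  "x \<in> dual_coord L \<longleftrightarrow> (\<exists>s::nat. 1 \<le> s \<and> s \<le> 2 * L \<and> x = - pi + pi / real L * real s)"
  unfolding dual_coord_def by auto

lemma dual_eq_vec_set: "dual L = {p. \<forall>j. p$j \<in> dual_coord L}"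
  unfolding dual_def mem_dual_coord_iff ..

lemma lbox_eq_vec_set: "lbox L = {l. \<forall>j. l$j \<in> {- int L<..int L}}"
  unfolding lbox_def by auto

lemma finite_lbox: "finite (lbox L :: (int^'d::finite) set)"
  unfolding lbox_eq_vec_set by (rule finite_vec_set) simp

lemma finite_dual: "finite (dual L :: (real^'d::finite) set)"
  unfolding dual_eq_vec_set by (rule finite_vec_set) (simp add: dual_coord_def)

lemma card_vec_set: "finite A \<Longrightarrow> card {p::'a^'d::finite. \<forall>j. p$j \<in> A} = card A ^ CARD('d)"
  using sum_prod_vec_set[of A "\<lambda>_ _. 1::nat"] by simp

lemma card_lbox: "card (lbox L :: (int^'d::finite) set) = (2 * L) ^ CARD('d)"
proof -
  have "nat (2 * int L) = 2 * L" by simp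
  then show ?thesis unfolding lbox_eq_vec_set by (subst card_vec_set) auto
qed

lemma sum_cis_dual_coord:
  assumes L: "L \<ge> 1" and k: "\<bar>k\<bar> < 2 * int L"
  shows "(\<Sum>a\<in>dual_coord L. cis (a * real_of_int k)) = (if k = 0 then of_nat (2 * L) else 0)"
proof -
  define w where "w = cis (pi * real_of_int k / real L)"
  have "inj_on (\<lambda>s. - pi + pi / real L * real s) {1..2*L}"
    using L by (intro inj_onI) auto
  then have "(\<Sum>a\<in>dual_coord L. cis (a * real_of_int k))
      = (\<Sum>s\<in>{1..2*L}. cis ((- pi + pi / real L * real s) * real_of_int k))"
    unfolding dual_coord_def by (simp add: sum.reindex)
  also have "\<dots> = (\<Sum>s\<in>{1..2*L}. cis (- pi * real_of_int k) * w ^ s)"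
    unfolding w_def Complex.DeMoivre cis_mult by (simp add: field_simps)
  also have "\<dots> = cis (- pi * real_of_int k) * w * (\<Sum>i<2*L. w ^ i)"
    by (simp add: sum.atLeast1_atMost_eq sum_distrib_left mult.assoc)
  finally have sum_eq: "(\<Sum>a\<in>dual_coord L. cis (a * real_of_int k))
      = cis (- pi * real_of_int k) * w * (\<Sum>i<2*L. w ^ i)" .
  show ?thesis
  proof (cases "k = 0")
    case True
    then show ?thesis unfolding sum_eq w_def by simp
  next
    case False
    have exponent: "real (2 * L) * (pi * real_of_int k / real L) = 2 * pi * real_of_int k"
      using L by (simp add: field_simps)
    have "w ^ (2 * L) = cis (2 * pi * real_of_int k)"
      unfolding w_def Complex.DeMoivre exponent ..
    then have w_root: "w ^ (2 * L) = 1" by simp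
    have "w \<noteq> 1"
    proof
      assume "w = 1"
      then have "cos (pi * real_of_int k / real L) = 1" unfolding w_def by (simp add: complex_eq_iff)
      then obtain n :: int where "pi * real_of_int k / real L = real_of_int n * 2 * pi"
        by (auto simp: cos_one_2pi_int)
      then have "real_of_int k = real_of_int (n * 2 * int L)" using L by (simp add: field_simps)
      then have "k = n * (2 * int L)" by (simp only: of_int_eq_iff mult.assoc)
      with False k show False by (cases "n = 0") (auto simp: abs_mult)
    qed
    then show ?thesis using sum_gp_strict[of w "2 * L"] w_root False unfolding sum_eq by simp
  qed
qed

lemma pdot_diff: "pdot p (y - x) = pdot p y - pdot p x"
  unfolding pdot_def by (simp add: algebra_simps sum_subtractf)

lemma pdot_uminus: "pdot p (- x) = - pdot p x"
  unfolding pdot_def by (simp add: sum_negf)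

lemma pdot_zero_left [simp]: "pdot 0 x = 0"
  unfolding pdot_def by simp

lemma pdot_zero_right [simp]: "pdot p 0 = 0"
  unfolding pdot_def by simp

lemma sum_cis_pdot_dual:
  fixes z :: "int^'d::finite"
  assumes L: "L \<ge> 1" and z: "\<And>j. \<bar>z$j\<bar> < 2 * int L"
  shows "(\<Sum>p\<in>dual L. cis (pdot p z)) = (if z = 0 then of_nat ((2 * L) ^ CARD('d)) else 0)"
proof -
  have "(\<Sum>p\<in>dual L. cis (pdot p z))
      = (\<Sum>p\<in>{p. \<forall>j. p$j \<in> dual_coord L}. \<Prod>j\<in>UNIV. cis (p$j * real_of_int (z$j)))"
    unfolding dual_eq_vec_set pdot_def by (simp add: cis_sum)
  also have "\<dots> = (\<Prod>j\<in>UNIV. \<Sum>a\<in>dual_coord L. cis (a * real_of_int (z$j)))"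
    by (rule sum_prod_vec_set) (simp add: dual_coord_def)
  also have "\<dots> = (\<Prod>j\<in>UNIV. if z$j = 0 then of_nat (2 * L) else 0)"
    using sum_cis_dual_coord[OF L z] by simp
  also have "\<dots> = (if z = 0 then of_nat ((2 * L) ^ CARD('d)) else 0)"
  proof (cases "z = 0")
    case False
    then obtain j where "z$j \<noteq> 0" by (auto simp: vec_eq_iff)
    then show ?thesis using False by (intro trans[OF prod_zero]) auto
  qed simp
  finally show ?thesis .
qed

lemma sin_cos_pdot_cong:
  fixes v w :: "int^'d::finite"
  assumes L: "L \<ge> 1" and p: "p \<in> dual L" and vw: "\<And>j. (v$j - w$j) mod (2 * int L) = 0"
  shows "sin (pdot p v) = sin (pdot p w) \<and> cos (pdot p v) = cos (pdot p w)"
proof -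
  have "\<forall>j. \<exists>s::nat. p$j = - pi + pi / real L * real s" using p unfolding dual_def by blast
  then obtain s where s: "\<And>j. p$j = - pi + pi / real L * real (s j)" by metis
  have "\<forall>j. \<exists>q. v$j - w$j = 2 * int L * q" using vw by (auto simp: mod_eq_0_iff_dvd dvd_def)
  then obtain q where q: "\<And>j. v$j - w$j = 2 * int L * q j" by metis
  have "pdot p v - pdot p w = (\<Sum>j\<in>UNIV. p$j * real_of_int (v$j - w$j))"
    unfolding pdot_def by (simp add: sum_subtractf algebra_simps)
  also have "\<dots> = (\<Sum>j\<in>UNIV. 2 * pi * real_of_int ((int (s j) - int L) * q j))"
    using L by (intro sum.cong refl) (simp add: s q field_simps)
  also have "\<dots> = 2 * pi * real_of_int (\<Sum>j\<in>UNIV. (int (s j) - int L) * q j)"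
    by (simp add: sum_distrib_left)
  finally have "pdot p v = pdot p w + 2 * pi * real_of_int (\<Sum>j\<in>UNIV. (int (s j) - int L) * q j)"
    by simp
  then show ?thesis using sin_cos_eq_iff by blast
qed

definition lattice_ft :: "nat \<Rightarrow> (int^'d \<Rightarrow> real) \<Rightarrow> real^'d \<Rightarrow> complex" where
  "lattice_ft L g p = (\<Sum>y\<in>lbox L. complex_of_real (g y) * cis (pdot p y))"

lemma lattice_ft_inversion:
  fixes g :: "int^'d::finite \<Rightarrow> real"
  assumes L: "L \<ge> 1" and y: "y \<in> lbox L"
  shows "(\<Sum>p\<in>dual L. lattice_ft L g p * cis (- pdot p y))
    = of_nat (card (lbox L :: (int^'d) set)) * complex_of_real (g y)"
proof -
  have "(\<Sum>p\<in>dual L. lattice_ft L g p * cis (- pdot p y))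
      = (\<Sum>u\<in>lbox L. complex_of_real (g u) * (\<Sum>p\<in>dual L. cis (pdot p (u - y))))"
    unfolding lattice_ft_def sum_distrib_right sum_distrib_left
    by (subst sum.swap) (simp add: mult.assoc cis_mult pdot_diff)
  also have "\<dots> = (\<Sum>u\<in>lbox L. if u = y then of_nat (card (lbox L :: (int^'d) set)) * complex_of_real (g y) else 0)"
  proof (intro sum.cong refl)
    fix u :: "int^'d" assume u: "u \<in> lbox L"
    have "\<bar>(u - y)$j\<bar> < 2 * int L" for j
    proof -
      have "- int L < u$j" "u$j \<le> int L" "- int L < y$j" "y$j \<le> int L"
        using u y unfolding mem_lbox_iff by auto
      then show ?thesis by (simp add: abs_less_iff)
    qed
    then show "complex_of_real (g u) * (\<Sum>p\<in>dual L. cis (pdot p (u - y)))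
        = (if u = y then of_nat (card (lbox L :: (int^'d) set)) * complex_of_real (g y) else 0)"
      using sum_cis_pdot_dual[OF L, of "u - y"] by (simp add: card_lbox)
  qed
  also have "\<dots> = of_nat (card (lbox L :: (int^'d) set)) * complex_of_real (g y)"
    using y by (simp add: sum.delta[OF finite_lbox])
  finally show ?thesis .
qed

lemma Im_lattice_ft_even:
  assumes L: "L \<ge> 1" and p: "p \<in> dual L" and even: "\<And>y. y \<in> lbox L \<Longrightarrow> g (torus_refl L y) = g y"
  shows "Im (lattice_ft L g p) = 0"
proof -
  define S where "S = (\<Sum>y\<in>lbox L. g y * sin (pdot p y))"
  have sin_refl: "sin (pdot p (torus_refl L y)) = - sin (pdot p y)" for y
  proof -
    have "((torus_refl L y)$j - (- y)$j) mod (2 * int L) = 0" for j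
      using torus_rep_diff_mod[of L "- y$j"] unfolding torus_refl_def by simp
    then show ?thesis using sin_cos_pdot_cong[OF L p, of "torus_refl L y" "- y"] by (simp add: pdot_uminus)
  qed
  have "S = (\<Sum>y\<in>lbox L. g (torus_refl L y) * sin (pdot p (torus_refl L y)))"
    unfolding S_def by (rule sum.reindex_bij_betw[OF bij_betw_torus_refl[OF L], symmetric])
  also have "\<dots> = - S"
    unfolding S_def sum_negf[symmetric] by (intro sum.cong) (simp_all add: even sin_refl)
  finally have "S = 0" by simp
  then show ?thesis unfolding lattice_ft_def S_def by (simp add: Im_sum)
qed

lemma lattice_ft_cos_inversion_even:
  fixes g :: "int^'d::finite \<Rightarrow> real"
  assumes L: "L \<ge> 1" and even: "\<And>y. y \<in> lbox L \<Longrightarrow> g (torus_refl L y) = g y" and y: "y \<in> lbox L"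
  shows "(\<Sum>p\<in>dual L. Re (lattice_ft L g p) * cos (pdot p y)) = real (card (lbox L :: (int^'d) set)) * g y"
proof -
  have "(\<Sum>p\<in>dual L. Re (lattice_ft L g p) * cos (pdot p y))
      = Re (\<Sum>p\<in>dual L. lattice_ft L g p * cis (- pdot p y))"
    unfolding Re_sum by (intro sum.cong refl) (simp add: Im_lattice_ft_even[where g = g, OF L _ even])
  then show ?thesis unfolding lattice_ft_inversion[OF L y] by simp
qed

lemma lattice_increment_lower_bound:
  fixes g :: "int^'d::finite \<Rightarrow> real"
  assumes L: "L \<ge> 1" and even: "\<And>y. y \<in> lbox L \<Longrightarrow> g (torus_refl L y) = g y"
    and bound: "\<And>p. p \<in> dual L - {0} \<Longrightarrow> Re (lattice_ft L g p) \<le> b p" and x: "x \<in> lbox L"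
  shows "(\<Sum>p\<in>dual L - {0}. b p * (cos (pdot p x) - 1)) \<le> real (card (lbox L :: (int^'d) set)) * (g x - g 0)"
proof -
  have "(\<Sum>p\<in>dual L - {0}. b p * (cos (pdot p x) - 1))
      \<le> (\<Sum>p\<in>dual L - {0}. Re (lattice_ft L g p) * (cos (pdot p x) - 1))"
    using bound by (intro sum_mono mult_right_mono_neg) auto
  also have "\<dots> = (\<Sum>p\<in>dual L. Re (lattice_ft L g p) * (cos (pdot p x) - 1))"
    by (rule sum.mono_neutral_left) (auto simp: finite_dual)
  also have "\<dots> = real (card (lbox L :: (int^'d) set)) * (g x - g 0)"
    using lattice_ft_cos_inversion_even[where g = g, OF L even x]
      lattice_ft_cos_inversion_even[where g = g, OF L even zero_mem_lbox[OF L]]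
    unfolding right_diff_distrib sum_subtractf by simp
  finally show ?thesis .
qed

lemma le_enn2real_if_ennreal_le:
  assumes "ennreal r \<le> e" "e < \<infinity>" shows "r \<le> enn2real e"
proof (cases "r \<ge> 0")
  case True
  then show ?thesis using enn2real_mono[OF assms(1)] assms(2) by simp
qed (use enn2real_nonneg[of e] in linarith)

lemma Bmat_increment:
  fixes Bh :: "real^'d::finite \<Rightarrow> ennreal"
  shows "Bmat Bh L l l' - Bmat Bh L l l
    = (\<Sum>p\<in>dual L - {0}. enn2real (Bh p) * (cos (pdot p (l - l')) - 1)) / real (card (lbox L :: (int^'d) set))"
  unfolding Bmat_def by (simp add: diff_divide_distrib[symmetric] sum_subtractf[symmetric] algebra_simps)

lemma cos_pdot_torus_shift:
  assumes "L \<ge> 1" "p \<in> dual L"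
  shows "cos (pdot p (torus_shift L (- l) l')) = cos (pdot p (l - l'))"
proof -
  have "((torus_shift L (- l) l')$j - (l' - l)$j) mod (2 * int L) = 0" for j
    using torus_rep_diff_mod[of L "l'$j + - l$j"] unfolding torus_shift_def by simp
  then have "cos (pdot p (torus_shift L (- l) l')) = cos (pdot p (- (l - l')))"
    using sin_cos_pdot_cong[OF assms] by simp
  then show ?thesis unfolding pdot_uminus by simp
qed

theorem lemma3p1:
  fixes \<phi> :: "nat^'d \<Rightarrow> real" and V :: "real^'v \<Rightarrow> real"
    and \<chi>\<^sub>0 :: "(real \<Rightarrow> real^'v) measure" and Bh :: "real^'d \<Rightarrow> ennreal"
    and m a \<beta> A\<^sub>V B\<^sub>V r :: real
  assumes "m > 0" and "a > 0" and "\<beta> > 0"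
    and "\<forall>k. \<phi> k \<ge> 0" and "\<phi> 0 = 0"
    and "(\<lambda>l::int^'d. \<phi> (\<chi> j. nat \<bar>l$j\<bar>)) summable_on UNIV"
    and "continuous_on UNIV V"
    and "\<forall>U x. orthogonal_transformation U \<longrightarrow> V (U x) = V x"
    and "r > 1" and "A\<^sub>V > 0" and "\<forall>x. V x \<ge> A\<^sub>V * norm x powr (2 * r) + B\<^sub>V"
    and "periodic_gaussian \<chi>\<^sub>0 m a \<beta>"
    and "continuous_on cube Bh" and "\<forall>p\<in>cube. Bh p > 0"
    and "(\<integral>\<^sup>+ p\<in>cube. Bh p \<partial>lborel) < \<infinity>"
    and "\<forall>L\<ge>1. \<forall>p\<in>dual L - {0}. ennreal (Re (Dhat \<chi>\<^sub>0 \<phi> V \<beta> L p)) \<le> Bh p"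
  shows "\<forall>L\<ge>1. (\<forall>p\<in>dual L - {0}. Bh p < \<infinity>) \<longrightarrow>
           (\<forall>l\<in>lbox L. \<forall>l'\<in>lbox L.
              Dmat \<chi>\<^sub>0 \<phi> V \<beta> L l l'
                \<ge> (Dmat \<chi>\<^sub>0 \<phi> V \<beta> L l l - Bmat Bh L l l) + Bmat Bh L l l')"
proof (intro allI impI ballI)
  fix L :: nat and l l' :: "int^'d"
  assume L: "L \<ge> 1" and B_finite: "\<forall>p\<in>dual L - {0}. Bh p < \<infinity>"
    and l: "l \<in> lbox L" and l': "l' \<in> lbox L"
  have \<chi>: "prob_space \<chi>\<^sub>0" "sets \<chi>\<^sub>0 = sets (path_space \<beta>)"
    using assms(12) unfolding periodic_gaussian_def by auto
  define g where "g = Dmat \<chi>\<^sub>0 \<phi> V \<beta> L 0"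
  define x where "x = torus_shift L (- l) l'"
  define N where "N = real (card (lbox L :: (int^'d) set))"
  have even: "g (torus_refl L y) = g y" if "y \<in> lbox L" for y
    unfolding g_def using Dmat_torus_refl[OF \<chi> L that] .
  have bound: "Re (lattice_ft L g p) \<le> enn2real (Bh p)" if "p \<in> dual L - {0}" for p
    using le_enn2real_if_ennreal_le assms(16) L B_finite that
    unfolding g_def Dhat_def lattice_ft_def by blast
  have "N * (Bmat Bh L l l' - Bmat Bh L l l) = (\<Sum>p\<in>dual L - {0}. enn2real (Bh p) * (cos (pdot p x) - 1))"
    using L by (simp add: Bmat_increment N_def card_lbox x_def cos_pdot_torus_shift)
  also have "\<dots> \<le> N * (g x - g 0)"
    unfolding N_def using lattice_increment_lower_bound[where g = g, OF L even bound] x_def L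
    by (simp add: torus_shift_mem_lbox)
  finally have "Bmat Bh L l l' - Bmat Bh L l l \<le> g x - g 0"
    using L by (simp add: N_def card_lbox)
  moreover have "Dmat \<chi>\<^sub>0 \<phi> V \<beta> L l l' = g x" "Dmat \<chi>\<^sub>0 \<phi> V \<beta> L l l = g 0"
    using Dmat_torus_shift[OF \<chi> L l l'] Dmat_torus_shift[OF \<chi> L l l]
    by (simp_all add: g_def x_def torus_shift_neg_self)
  ultimately show "Dmat \<chi>\<^sub>0 \<phi> V \<beta> L l l' \<ge> (Dmat \<chi>\<^sub>0 \<phi> V \<beta> L l l - Bmat Bh L l l) + Bmat Bh L l l'"
    by simp
qed
end
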